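(* For integers $s_1,s_2>0$ and $r_1,r_2\ge0$ (writing $\binom{a}{b}$ for binomial coefficients and $[\,\cdot\,]$ for bi-brackets, and $B_k$ for Bernoulli numbers with $\frac{X}{e^X-1}=\sum_k\frac{B_k}{k!}X^k$): (i) \begin{align*} \left[\begin{matrix}s_1\\ r_1\end{matrix}\right]\left[\begin{matrix}s_2\\ r_2\end{matrix}\right] =&\left[\begin{matrix}s_1,s_2\\ r_1,r_2\end{matrix}\right]+\left[\begin{matrix}s_2,s_1\\ r_2,r_1\end{matrix}\right]+\binom{r_1+r_2}{r_1}\left[\begin{matrix}s_1+s_2\\ r_1+r_2\end{matrix}\right]\\ &+\binom{r_1+r_2}{r_1}\sum_{j=1}^{s_1}\frac{(-1)^{s_2-1}B_{s_1+s_2-j}}{(s_1+s_2-j)!}\binom{s_1+s_2-j-1}{s_1-j}\left[\begin{matrix}j\\ r_1+r_2\end{matrix}\right]\\ &+\binom{r_1+r_2}{r_1}\sum_{j=1}^{s_2}\frac{(-1)^{s_1-1}B_{s_1+s_2-j}}{(s_1+s_2-j)!}\binom{s_1+s_2-j-1}{s_2-j}\left[\begin{matrix}j\\ r_1+r_2\end{matrix}\right]; \end{align*} (ii) \begin{align*} \left[\begin{matrix}s_1\\ r_1\end{matrix}\right]\left[\begin{matrix}s_2\\ r_2\end{matrix}\right] =&\sum_{\substack{1\le j\le s_1\\ 0\le k\le r_2}}\binom{s_1+s_2-j-1}{s_1-j}\binom{r_1+r_2-k}{r_1}(-1)^{r_2-k}\left[\begin{matrix}s_1+s_2-j,\ j\\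 k,\ r_1+r_2-k\end{matrix}\right]\\ &+\sum_{\substack{1\le j\le s_2\\ 0\le k\le r_1}}\binom{s_1+s_2-j-1}{s_1-1}\binom{r_1+r_2-k}{r_1-k}(-1)^{r_1-k}\left[\begin{matrix}s_1+s_2-j,\ j\\ k,\ r_1+r_2-k\end{matrix}\right]\\ &+\binom{s_1+s_2-2}{s_1-1}\left[\begin{matrix}s_1+s_2-1\\ r_1+r_2+1\end{matrix}\right]\\ &+\binom{s_1+s_2-2}{s_1-1}\sum_{j=0}^{r_1}\frac{(-1)^{r_2}B_{r_1+r_2-j+1}}{(r_1+r_2-j+1)!}\binom{r_1+r_2-j}{r_1-j}\left[\begin{matrix}s_1+s_2-1\\ j\end{matrix}\right]\\ &+\binom{s_1+s_2-2}{s_1-1}\sum_{j=0}^{r_2}\frac{(-1)^{r_1}B_{r_1+r_2-j+1}}{(r_1+r_2-j+1)!}\binom{r_1+r_2-j}{r_2-j}\left[\begin{matrix}s_1+s_2-1\\ j\end{matrix}\right]. \end{align*}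
   Context: For integers $s_1,\dots,s_l\ge1$ and $r_1,\dots,r_l\ge0$ the bi-bracket is \[ \left[\begin{matrix}s_1,\dots,s_l\\ r_1,\dots,r_l\end{matrix}\right]:=\sum_{\substack{u_1>\dots>u_l>0\\ v_1,\dots,v_l>0}}\prod_{j=1}^{l}\frac{u_j^{r_j}}{r_j!}\,\frac{v_j^{s_j-1}}{(s_j-1)!}\;q^{u_1v_1+\dots+u_lv_l}\in\mathbb{Q}[[q]]. \] *)

theory Defs
  imports "HOL-Computational_Algebra.Formal_Power_Series"
begin

definition bernoulli :: "nat \<Rightarrow> rat" where
  "bernoulli k = fact k * fps_nth (fps_X / (fps_exp 1 - 1)) k"

text \<open>Bi-bracket with upper row ss = [s_1,...,s_l] and lower row rs = [r_1,...,r_l],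
  as a formal power series in q over the rationals.\<close>
definition bibracket :: "nat list \<Rightarrow> nat list \<Rightarrow> rat fps" where
  "bibracket ss rs = Abs_fps (\<lambda>N.
     \<Sum>(us, vs) \<in> {(us, vs). length us = length ss \<and> length vs = length ss
                    \<and> sorted_wrt (>) us \<and> (\<forall>u\<in>set us. u > 0) \<and> (\<forall>v\<in>set vs. v > 0)
                    \<and> (\<Sum>j<length ss. us ! j * vs ! j) = N}.
       \<Prod>j<length ss. (of_nat (us ! j) ^ (rs ! j) / fact (rs ! j))
                      * (of_nat (vs ! j) ^ (ss ! j - 1) / fact (ss ! j - 1)))"

end

theory Submission
  imports Defs
begin

text \<open>Expanding the product, the coefficient of \<open>q^n\<close> on the left is a sum over pairs
  \<open>(u1, v1), (u2, v2)\<close> of positive integers with \<open>u1 v1 + u2 v2 = n\<close>, weighted by divided powers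
  \<open>u^r / r!\<close> and \<open>v^(s-1) / (s-1)!\<close>.

  For (i) this sum is split according to \<open>u1 > u2\<close>, \<open>u1 < u2\<close> and \<open>u1 = u2\<close>. The first two parts are
  the depth-two bi-brackets; on the diagonal, the inner sum over \<open>v1 + v2 = m\<close> is a discrete
  convolution of divided powers, which Faulhaber's formula evaluates as a polynomial in \<open>m\<close> whose
  lower-order terms carry the Bernoulli numbers.

  For (ii) the sum is split according to \<open>v1\<close> versus \<open>v2\<close> instead. The shear
  \<open>(u1, v1), (u2, v2) \<mapsto> (u1 + u2, v2), (u1, v1 - v2)\<close> maps the part \<open>v1 > v2\<close> bijectively onto the
  index set of a depth-two bi-bracket, and binomial expansion of the weights produces the double sums.
  The diagonal \<open>v1 = v2\<close> is the diagonal of (i) with the roles of \<open>u\<close> and \<open>v\<close> exchanged.\<close>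

unbundle fps_syntax

lemma sum_triangle_swap:
  fixes f :: "nat \<Rightarrow> nat \<Rightarrow> 'a::comm_monoid_add"
  shows "(\<Sum>k\<le>m. \<Sum>i\<le>m - k. f k i) = (\<Sum>i\<le>m. \<Sum>k\<le>m - i. f k i)"
proof -
  have "(\<Sum>k\<le>m. \<Sum>i\<le>m - k. f k i) = (\<Sum>k\<le>m. \<Sum>i\<le>m. if k + i \<le> m then f k i else 0)"
    by (intro sum.cong refl sum.mono_neutral_cong_left) auto
  also have "\<dots> = (\<Sum>i\<le>m. \<Sum>k\<le>m. if k + i \<le> m then f k i else 0)"
    by (rule sum.swap)
  also have "\<dots> = (\<Sum>i\<le>m. \<Sum>k\<le>m - i. f k i)"
    by (intro sum.cong refl sum.mono_neutral_cong_right) auto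
  finally show ?thesis .
qed

lemma sum_atMost_reverse: "(\<Sum>i\<le>m. f i) = (\<Sum>i\<le>m. f (m - i :: nat))"
  by (rule sum.reindex_bij_witness[where i="\<lambda>i. m - i" and j="\<lambda>i. m - i"]) auto

lemma sum_split_by_order:
  fixes f g :: "'a \<Rightarrow> 'b::linorder"
  assumes "finite A"
  shows "sum h A = sum h {x\<in>A. f x < g x} + sum h {x\<in>A. g x < f x} + sum h {x\<in>A. f x = g x}"
proof -
  have "sum h A = sum h ({x\<in>A. f x < g x} \<union> {x\<in>A. g x < f x} \<union> {x\<in>A. f x = g x})"
    by (rule arg_cong[where f="sum h"]) auto
  also have "\<dots> = sum h {x\<in>A. f x < g x} + sum h {x\<in>A. g x < f x} + sum h {x\<in>A. f x = g x}"
    using assms by (subst sum.union_disjoint; auto)+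
  finally show ?thesis .
qed

section \<open>Bernoulli numbers\<close>

definition bernoulli_fps :: "rat fps" where
  "bernoulli_fps = fps_X / (fps_exp 1 - 1)"

definition exp_quotient :: "rat fps" where
  "exp_quotient = Abs_fps (\<lambda>k. 1 / fact (Suc k))"

lemma bernoulli_eq_fps_nth: "bernoulli k / fact k = bernoulli_fps $ k"
  by (simp add: bernoulli_def bernoulli_fps_def)

lemma fps_X_mult_exp_quotient: "fps_X * exp_quotient = fps_exp 1 - 1"
proof (rule fps_ext)
  show "(fps_X * exp_quotient) $ n = (fps_exp 1 - 1) $ n" for n
    by (cases n) (simp_all add: exp_quotient_def algebra_simps)
qed

lemma bernoulli_fps_mult_exp_quotient: "bernoulli_fps * exp_quotient = 1"
proof -
  have nonzero: "fps_exp (1::rat) - 1 \<noteq> 0"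
  proof
    assume "fps_exp (1::rat) - 1 = 0"
    then have "(fps_exp (1::rat) - 1) $ 1 = 0" by simp
    then show False by simp
  qed
  have "subdegree (fps_exp (1::rat) - 1) \<le> subdegree (fps_X :: rat fps)"
    by (rule subdegree_leI) auto
  then have "bernoulli_fps * (fps_exp 1 - 1) = fps_X"
    unfolding bernoulli_fps_def by (rule fps_times_divide_eq[OF nonzero])
  then have "fps_X * (bernoulli_fps * exp_quotient) = fps_X * 1"
    by (simp add: fps_X_mult_exp_quotient[symmetric] algebra_simps)
  then show ?thesis by simp
qed

lemma bernoulli_fps_recurrence:
  "(\<Sum>k\<le>d. bernoulli_fps $ k / fact (Suc d - k)) = (if d = 0 then 1 else 0)"
proof -
  have "(\<Sum>k\<le>d. bernoulli_fps $ k / fact (Suc d - k)) = (bernoulli_fps * exp_quotient) $ d"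
    by (auto simp: fps_mult_nth exp_quotient_def atMost_atLeast0 Suc_diff_le intro!: sum.cong)
  then show ?thesis by (simp add: bernoulli_fps_mult_exp_quotient)
qed

lemma bernoulli_fps_0: "bernoulli_fps $ 0 = 1"
  using bernoulli_fps_recurrence[of 0] by simp

lemma exp_quotient_reflect: "exp_quotient oo - fps_X = fps_exp (-1) * exp_quotient"
proof -
  have "- fps_X * (exp_quotient oo - fps_X) = (fps_X * exp_quotient) oo - fps_X"
    by (simp add: fps_compose_mult_distrib)
  also have "\<dots> = fps_exp (-1) - 1"
    using fps_exp_compose_linear[of 1 "-1"] by (simp add: fps_X_mult_exp_quotient fps_compose_sub_distrib)
  also have "\<dots> = - (fps_exp (-1) * (fps_exp 1 - 1))"
    by (simp add: right_diff_distrib flip: fps_exp_add_mult)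
  also have "\<dots> = - fps_X * (fps_exp (-1) * exp_quotient)"
    by (simp add: fps_X_mult_exp_quotient[symmetric] mult_ac)
  finally show ?thesis by simp
qed

text \<open>The substitution \<open>X \<mapsto> -X\<close> turns \<open>X / (e^X - 1)\<close> into
  \<open>X e^X / (e^X - 1) = X + X / (e^X - 1)\<close>.\<close>
lemma bernoulli_fps_reflect: "bernoulli_fps oo - fps_X = bernoulli_fps + fps_X"
proof -
  have "(bernoulli_fps oo - fps_X) * (exp_quotient oo - fps_X) = 1"
    by (simp add: bernoulli_fps_mult_exp_quotient flip: fps_compose_mult_distrib)
  moreover have "(bernoulli_fps + fps_X) * (exp_quotient oo - fps_X) = 1"
  proof -
    have "(bernoulli_fps + fps_X) * (exp_quotient oo - fps_X)
        = fps_exp (-1) * (bernoulli_fps * exp_quotient + fps_X * exp_quotient)"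
      by (simp add: exp_quotient_reflect algebra_simps)
    also have "\<dots> = fps_exp (-1) * fps_exp 1"
      by (simp add: bernoulli_fps_mult_exp_quotient fps_X_mult_exp_quotient)
    finally show ?thesis by (simp flip: fps_exp_add_mult)
  qed
  moreover have "exp_quotient oo - fps_X \<noteq> 0"
    by (metis fps_compose_nth_0 exp_quotient_def fps_nth_Abs_fps fps_zero_nth fact_1 One_nat_def
        div_by_1 one_neq_zero)
  ultimately show ?thesis
    by (metis mult_right_cancel)
qed

lemma bernoulli_fps_reflect_nth:
  "(-1) ^ k * bernoulli_fps $ k = bernoulli_fps $ k + (if k = 1 then 1 else 0)"
proof -
  have "(bernoulli_fps oo - fps_X) $ k = (bernoulli_fps + fps_X) $ k"
    by (simp only: bernoulli_fps_reflect)
  then show ?thesis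
    unfolding fps_compose_uminus' by (simp add: fps_X_def)
qed

section \<open>Divided powers and Faulhaber's formula\<close>

definition dpow :: "nat \<Rightarrow> 'a::field_char_0 \<Rightarrow> 'a" where
  "dpow m x = x ^ m / fact m"

lemma dpow_at_0: "dpow m 0 = (if m = 0 then 1 else 0)"
  by (simp add: dpow_def)

lemma dpow_uminus: "dpow m (- x) = (-1) ^ m * dpow m x"
  by (simp add: dpow_def power_minus[of x])

lemma dpow_mult: "dpow i x * dpow j x = of_nat ((i + j) choose i) * dpow (i + j) x"
  by (simp add: dpow_def binomial_fact field_simps power_add)

lemma dpow_add: "dpow m (x + y) = (\<Sum>i\<le>m. dpow i x * dpow (m - i) y)"
proof -
  have "dpow m (x + y) = (\<Sum>i\<le>m. of_nat (m choose i) * x ^ i * y ^ (m - i)) / fact m"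
    by (simp add: dpow_def binomial_ring)
  also have "\<dots> = (\<Sum>i\<le>m. dpow i x * dpow (m - i) y)"
    unfolding sum_divide_distrib
    by (rule sum.cong) (auto simp: dpow_def binomial_fact field_simps)
  finally show ?thesis .
qed

lemma dpow_diff: "dpow m (x - y) = (\<Sum>k\<le>m. (-1) ^ (m - k) * dpow k x * dpow (m - k) y)"
  using dpow_add[of m x "- y"] by (simp add: dpow_uminus mult_ac)

text \<open>\<open>bernpoly m\<close> is the Bernoulli polynomial \<open>B_m\<close> divided by \<open>m!\<close>.\<close>
definition bernpoly :: "nat \<Rightarrow> rat \<Rightarrow> rat" where
  "bernpoly m x = (\<Sum>k\<le>m. bernoulli_fps $ k * dpow (m - k) x)"

lemma bernpoly_at_0: "bernpoly (Suc m) 0 = bernoulli_fps $ Suc m"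
proof -
  have "bernpoly (Suc m) 0 = (\<Sum>k\<le>Suc m. if k = Suc m then bernoulli_fps $ k else 0)"
    unfolding bernpoly_def by (intro sum.cong refl) (auto simp: dpow_at_0)
  then show ?thesis by simp
qed

lemma bernpoly_difference: "bernpoly (Suc m) (x + 1) - bernpoly (Suc m) x = dpow m x"
proof -
  have dpow_1: "dpow j (1::rat) = 1 / fact j" for j by (simp add: dpow_def)
  have "bernpoly (Suc m) (x + 1)
      = (\<Sum>k\<le>Suc m. bernoulli_fps $ k * (\<Sum>i\<le>Suc m - k. dpow i x / fact (Suc m - k - i)))"
    unfolding bernpoly_def dpow_add dpow_1 by simp
  also have "\<dots> = (\<Sum>k\<le>Suc m. bernoulli_fps $ k * (\<Sum>i<Suc m - k. dpow i x / fact (Suc m - k - i)))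
      + bernpoly (Suc m) x"
    unfolding bernpoly_def sum.distrib[symmetric]
    by (rule sum.cong) (auto simp: lessThan_Suc_atMost[symmetric] algebra_simps)
  finally have "bernpoly (Suc m) (x + 1) - bernpoly (Suc m) x
      = (\<Sum>k\<le>Suc m. bernoulli_fps $ k * (\<Sum>i<Suc m - k. dpow i x / fact (Suc m - k - i)))"
    by simp
  also have "\<dots> = (\<Sum>k\<le>m. \<Sum>i\<le>m - k. bernoulli_fps $ k * (dpow i x / fact (Suc m - k - i)))"
    by (simp add: sum_distrib_left Suc_diff_le lessThan_Suc_atMost)
  also have "\<dots> = (\<Sum>i\<le>m. \<Sum>k\<le>m - i. bernoulli_fps $ k * (dpow i x / fact (Suc m - k - i)))"
    by (rule sum_triangle_swap)
  also have "\<dots> = (\<Sum>i\<le>m. dpow i x * (\<Sum>k\<le>m - i. bernoulli_fps $ k / fact (Suc (m - i) - k)))"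
    unfolding sum_distrib_left by (intro sum.cong refl) (auto simp: Suc_diff_le ac_simps)
  also have "\<dots> = (\<Sum>i\<le>m. if i = m then dpow i x else 0)"
  proof (intro sum.cong refl)
    fix i assume "i \<in> {..m}"
    then show "dpow i x * (\<Sum>k\<le>m - i. bernoulli_fps $ k / fact (Suc (m - i) - k))
        = (if i = m then dpow i x else 0)"
      using bernoulli_fps_recurrence[of "m - i"] by auto
  qed
  finally show ?thesis by simp
qed

lemma sum_dpow_faulhaber:
  "(\<Sum>v<n. dpow m (of_nat v)) = bernpoly (Suc m) (of_nat n) - bernoulli_fps $ Suc m"
proof (induction n)
  case 0
  then show ?case by (simp add: bernpoly_at_0)
next
  case (Suc n)
  then show ?case
    using bernpoly_difference[of m "of_nat n"] by (simp add: add.commute)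
qed

lemma alternating_choose_sum:
  assumes "k \<le> a + b + 1"
  shows "(\<Sum>t\<le>b. (-1) ^ t * of_nat ((a + t) choose t) * of_nat ((a + b + 1 - k) choose (b - t)) :: rat)
       = (if k = 0 then 1 else if k \<le> b then 0 else (-1) ^ b * of_nat ((k - 1) choose b))"
proof -
  have neg_upper: "(-(of_nat a + 1) :: rat) gchoose t = (-1) ^ t * of_nat ((a + t) choose t)" for t
  proof -
    have "(-(of_nat a + 1) :: rat) gchoose t = (-1) ^ t * ((of_nat t - (-(of_nat a + 1)) - 1) gchoose t)"
      by (rule gbinomial_negated_upper)
    also have "(of_nat t - (-(of_nat a + 1)) - 1 :: rat) = of_nat (a + t)" by simp
    finally show ?thesis unfolding binomial_gbinomial .
  qed
  have "(\<Sum>t\<le>b. (-1) ^ t * of_nat ((a + t) choose t) * of_nat ((a + b + 1 - k) choose (b - t)) :: rat)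
      = (\<Sum>t=0..b. ((-(of_nat a + 1) :: rat) gchoose t) * (of_nat (a + b + 1 - k) gchoose (b - t)))"
    unfolding atMost_atLeast0 by (intro sum.cong refl) (simp only: neg_upper binomial_gbinomial)
  also have "\<dots> = (-(of_nat a + 1) + of_nat (a + b + 1 - k)) gchoose b"
    by (rule gbinomial_Vandermonde)
  also have "(-(of_nat a + 1) + of_nat (a + b + 1 - k) :: rat) = of_int (int b - int k)"
    using assms by simp
  finally have vandermonde: "(\<Sum>t\<le>b. (-1) ^ t * of_nat ((a + t) choose t)
      * of_nat ((a + b + 1 - k) choose (b - t)) :: rat) = of_int (int b - int k) gchoose b" .
  show ?thesis
  proof (cases "k \<le> b")
    case True
    then have "(of_int (int b - int k) :: rat) = of_nat (b - k)" by simp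
    then have "(of_int (int b - int k) :: rat) gchoose b = of_nat ((b - k) choose b)"
      by (simp only: binomial_gbinomial)
    moreover have "(b - k) choose b = (if k = 0 then 1 else 0)"
      using True by auto
    ultimately show ?thesis using vandermonde True by simp
  next
    case False
    have "(of_int (int b - int k) :: rat) gchoose b
        = (-1) ^ b * ((of_nat b - of_int (int b - int k) - 1) gchoose b)"
      by (rule gbinomial_negated_upper)
    also have "(of_nat b - of_int (int b - int k) - 1 :: rat) = of_nat (k - 1)"
      using False by simp
    also have "(of_nat (k - 1) :: rat) gchoose b = of_nat ((k - 1) choose b)"
      by (simp only: binomial_gbinomial)
    finally show ?thesis using vandermonde False by simp
  qed
qed

lemma dpow_mult_bernpoly:
  "dpow j x * bernpoly m x
     = (\<Sum>k\<le>j + m. bernoulli_fps $ k * of_nat ((j + m - k) choose j) * dpow (j + m - k) x)"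
proof -
  have "dpow j x * bernpoly m x
      = (\<Sum>k\<le>m. bernoulli_fps $ k * of_nat ((j + m - k) choose j) * dpow (j + m - k) x)"
    unfolding bernpoly_def sum_distrib_left
  proof (intro sum.cong refl)
    fix k assume "k \<in> {..m}"
    then have "j + (m - k) = j + m - k" by simp
    then show "dpow j x * (bernoulli_fps $ k * dpow (m - k) x)
        = bernoulli_fps $ k * of_nat ((j + m - k) choose j) * dpow (j + m - k) x"
      by (simp add: dpow_mult)
  qed
  also have "\<dots> = (\<Sum>k\<le>j + m. bernoulli_fps $ k * of_nat ((j + m - k) choose j) * dpow (j + m - k) x)"
    by (rule sum.mono_neutral_left) auto
  finally show ?thesis .
qed

section \<open>Convolution of divided powers\<close>

text \<open>With \<open>s1 = a + 1\<close>, \<open>s2 = b + 1\<close> and \<open>j = i + 1\<close>, \<open>bernoulli_coeff a b i\<close> is the coefficient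
  of \<open>[j; r1 + r2]\<close> in the first Bernoulli sum of part (i); part (ii) uses it with \<open>a, b\<close>
  replaced by \<open>r1, r2\<close>.\<close>
definition bernoulli_coeff :: "nat \<Rightarrow> nat \<Rightarrow> nat \<Rightarrow> rat" where
  "bernoulli_coeff a b i = (-1) ^ b * bernoulli_fps $ (a + b + 1 - i) * of_nat ((a + b - i) choose (a - i))"

lemma sum_bernoulli_dpow_tail:
  "(\<Sum>k\<le>a + b + 1. bernoulli_fps $ k * dpow (a + b + 1 - k) x
      * (if k = 0 then 1 else if k \<le> b then 0 else (-1) ^ b * of_nat ((k - 1) choose b)))
     = dpow (a + b + 1) x + (\<Sum>i\<le>a. bernoulli_coeff a b i * dpow i x)"
  (is "(\<Sum>k\<le>?M. ?f k) = _")
proof -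
  have "(\<Sum>k\<le>?M. ?f k) = (\<Sum>i\<le>?M. ?f (?M - i))"
    by (rule sum_atMost_reverse)
  also have "\<dots> = (\<Sum>i\<le>a. ?f (?M - i)) + (\<Sum>i\<in>{a<..?M}. ?f (?M - i))"
  proof -
    have "{..?M} = {..a} \<union> {a<..?M}" by auto
    then show ?thesis by (simp only:) (rule sum.union_disjoint; auto)
  qed
  also have "(\<Sum>i\<in>{a<..?M}. ?f (?M - i)) = (\<Sum>i\<in>{a<..?M}. if i = ?M then dpow ?M x else 0)"
    by (intro sum.cong refl) (auto simp: bernoulli_fps_0)
  also have "(\<Sum>i\<le>a. ?f (?M - i)) = (\<Sum>i\<le>a. bernoulli_coeff a b i * dpow i x)"
  proof (intro sum.cong refl)
    fix i assume "i \<in> {..a}"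
    then have "(a + b - i) choose b = (a + b - i) choose (a - i)"
      by (subst binomial_symmetric) auto
    with \<open>i \<in> {..a}\<close> show "?f (?M - i) = bernoulli_coeff a b i * dpow i x"
      by (simp add: bernoulli_coeff_def)
  qed
  finally show ?thesis by simp
qed

lemma alternating_sum_dpow_bernpoly:
  "(\<Sum>t\<le>b. (-1) ^ t * of_nat ((a + t) choose t) * dpow (b - t) x * bernpoly (Suc (a + t)) x)
     = dpow (a + b + 1) x + (\<Sum>i\<le>a. bernoulli_coeff a b i * dpow i x)"
proof -
  define M where "M = a + b + 1"
  have "(\<Sum>t\<le>b. (-1) ^ t * of_nat ((a + t) choose t) * dpow (b - t) x * bernpoly (Suc (a + t)) x)
      = (\<Sum>t\<le>b. \<Sum>k\<le>M. (-1) ^ t * of_nat ((a + t) choose t)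
           * (bernoulli_fps $ k * of_nat ((M - k) choose (b - t)) * dpow (M - k) x))"
  proof (intro sum.cong refl)
    fix t assume "t \<in> {..b}"
    then have "b - t + Suc (a + t) = M" by (simp add: M_def)
    then show "(-1) ^ t * of_nat ((a + t) choose t) * dpow (b - t) x * bernpoly (Suc (a + t)) x
        = (\<Sum>k\<le>M. (-1) ^ t * of_nat ((a + t) choose t)
           * (bernoulli_fps $ k * of_nat ((M - k) choose (b - t)) * dpow (M - k) x))"
      using dpow_mult_bernpoly[of "b - t" x "Suc (a + t)"] by (simp add: sum_distrib_left mult.assoc)
  qed
  also have "\<dots> = (\<Sum>k\<le>M. bernoulli_fps $ k * dpow (M - k) x
      * (\<Sum>t\<le>b. (-1) ^ t * of_nat ((a + t) choose t) * of_nat ((M - k) choose (b - t))))"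
    by (subst sum.swap) (simp add: sum_distrib_left mult_ac)
  also have "\<dots> = (\<Sum>k\<le>M. bernoulli_fps $ k * dpow (M - k) x
      * (if k = 0 then 1 else if k \<le> b then 0 else (-1) ^ b * of_nat ((k - 1) choose b)))"
  proof (intro sum.cong refl)
    fix k assume "k \<in> {..M}"
    then show "bernoulli_fps $ k * dpow (M - k) x
        * (\<Sum>t\<le>b. (-1) ^ t * of_nat ((a + t) choose t) * of_nat ((M - k) choose (b - t)))
        = bernoulli_fps $ k * dpow (M - k) x
        * (if k = 0 then 1 else if k \<le> b then 0 else (-1) ^ b * of_nat ((k - 1) choose b))"
      using alternating_choose_sum[of k a b] by (simp add: M_def)
  qed
  finally show ?thesis
    unfolding M_def sum_bernoulli_dpow_tail .
qed

lemma bernoulli_fps_reflect_shifted: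
  "- ((-1) ^ c * bernoulli_fps $ (a + c + 1))
     = (-1) ^ a * bernoulli_fps $ (a + c + 1) + (if a = 0 \<and> c = 0 then 1 else 0)"
proof -
  have "- ((-1) ^ c * bernoulli_fps $ (a + c + 1))
      = (-1) ^ a * ((-1) ^ (a + c + 1) * bernoulli_fps $ (a + c + 1))"
    by (simp add: power_add)
  also have "\<dots> = (-1) ^ a * (bernoulli_fps $ (a + c + 1) + (if a + c + 1 = 1 then 1 else 0))"
    by (simp only: bernoulli_fps_reflect_nth)
  finally show ?thesis by auto
qed

lemma alternating_sum_dpow_bernoulli:
  "- (\<Sum>t\<le>b. (-1) ^ t * of_nat ((a + t) choose t) * dpow (b - t) x * bernoulli_fps $ Suc (a + t))
     = (\<Sum>i\<le>b. bernoulli_coeff b a i * dpow i x) + (if a = 0 then dpow b x else 0)"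
proof -
  have "- (\<Sum>t\<le>b. (-1) ^ t * of_nat ((a + t) choose t) * dpow (b - t) x * bernoulli_fps $ Suc (a + t))
      = (\<Sum>i\<le>b. - ((-1) ^ (b - i) * bernoulli_fps $ (a + (b - i) + 1))
           * (of_nat ((a + (b - i)) choose (b - i)) * dpow i x))"
    by (subst sum_atMost_reverse) (simp add: sum_negf mult_ac)
  also have "\<dots> = (\<Sum>i\<le>b. bernoulli_coeff b a i * dpow i x + (if a = 0 \<and> i = b then dpow b x else 0))"
  proof (intro sum.cong refl)
    fix i assume "i \<in> {..b}"
    then have index: "a + (b - i) = b + a - i" by auto
    show "- ((-1) ^ (b - i) * bernoulli_fps $ (a + (b - i) + 1))
        * (of_nat ((a + (b - i)) choose (b - i)) * dpow i x)
        = bernoulli_coeff b a i * dpow i x + (if a = 0 \<and> i = b then dpow b x else 0)"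
      unfolding bernoulli_fps_reflect_shifted unfolding index bernoulli_coeff_def
      using \<open>i \<in> {..b}\<close> by (auto simp: Suc_diff_le algebra_simps)
  qed
  also have "\<dots> = (\<Sum>i\<le>b. bernoulli_coeff b a i * dpow i x) + (if a = 0 then dpow b x else 0)"
    by (simp add: sum.distrib)
  finally show ?thesis .
qed

lemma dpow_mult_dpow_diff:
  "dpow a v * dpow b (x - v)
     = (\<Sum>t\<le>b. (-1) ^ t * of_nat ((a + t) choose t) * dpow (b - t) x * dpow (a + t) v)"
proof -
  have "dpow a v * dpow b (x - v) = (\<Sum>t\<le>b. (-1) ^ t * dpow (b - t) x * (dpow a v * dpow t v))"
    using dpow_add[of b "- v" x] by (simp add: sum_distrib_left dpow_uminus mult_ac)
  also have "\<dots> = (\<Sum>t\<le>b. (-1) ^ t * of_nat ((a + t) choose t) * dpow (b - t) x * dpow (a + t) v)"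
  proof (intro sum.cong refl)
    fix t
    have "(a + t) choose a = (a + t) choose t"
      using binomial_symmetric[of a "a + t"] by simp
    then show "(-1) ^ t * dpow (b - t) x * (dpow a v * dpow t v)
        = (-1) ^ t * of_nat ((a + t) choose t) * dpow (b - t) x * dpow (a + t) v"
      by (simp add: dpow_mult)
  qed
  finally show ?thesis .
qed

text \<open>A discrete analogue of the Beta integral \<open>\<integral>\<^sub>0\<^sup>n v^a/a! (n - v)^b/b! dv = n^(a+b+1)/(a+b+1)!\<close>;
  the correction terms come from Faulhaber's formula.\<close>
lemma dpow_convolution:
  assumes "1 \<le> n"
  shows "(\<Sum>v\<in>{1..<n}. dpow a (of_nat v) * dpow b (of_nat n - of_nat v))
     = dpow (a + b + 1) (of_nat n) + (\<Sum>i\<le>a. bernoulli_coeff a b i * dpow i (of_nat n))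
       + (\<Sum>i\<le>b. bernoulli_coeff b a i * dpow i (of_nat n))"
proof -
  define x :: rat where "x = of_nat n"
  define c where "c t = (-1) ^ t * of_nat ((a + t) choose t) * dpow (b - t) x" for t
  have "{..<n} = insert 0 {1..<n}" using assms by auto
  then have "(\<Sum>v<n. dpow a (of_nat v) * dpow b (x - of_nat v))
      = (if a = 0 then dpow b x else 0) + (\<Sum>v\<in>{1..<n}. dpow a (of_nat v) * dpow b (x - of_nat v))"
    by (simp add: dpow_at_0)
  moreover have "(\<Sum>v<n. dpow a (of_nat v) * dpow b (x - of_nat v))
      = (\<Sum>t\<le>b. c t * (\<Sum>v<n. dpow (a + t) (of_nat v)))"
    unfolding dpow_mult_dpow_diff c_def by (subst sum.swap) (simp add: sum_distrib_left mult_ac)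
  moreover have "(\<Sum>t\<le>b. c t * (\<Sum>v<n. dpow (a + t) (of_nat v)))
      = (\<Sum>t\<le>b. c t * bernpoly (Suc (a + t)) x) - (\<Sum>t\<le>b. c t * bernoulli_fps $ Suc (a + t))"
    by (simp add: sum_dpow_faulhaber x_def right_diff_distrib sum_subtractf)
  moreover have "(\<Sum>t\<le>b. c t * bernpoly (Suc (a + t)) x)
      = dpow (a + b + 1) x + (\<Sum>i\<le>a. bernoulli_coeff a b i * dpow i x)"
    unfolding c_def by (rule alternating_sum_dpow_bernpoly)
  moreover have "- (\<Sum>t\<le>b. c t * bernoulli_fps $ Suc (a + t))
      = (\<Sum>i\<le>b. bernoulli_coeff b a i * dpow i x) + (if a = 0 then dpow b x else 0)"
    unfolding c_def by (rule alternating_sum_dpow_bernoulli)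
  ultimately show ?thesis
    unfolding x_def[symmetric] by linarith
qed

section \<open>Coefficients of bi-brackets\<close>

definition factor_pairs :: "nat \<Rightarrow> (nat \<times> nat) set" where
  "factor_pairs n = {(u, v). 0 < u \<and> 0 < v \<and> u * v = n}"

definition factor_quads :: "nat \<Rightarrow> ((nat \<times> nat) \<times> (nat \<times> nat)) set" where
  "factor_quads n = {((u1, v1), (u2, v2)). 0 < u1 \<and> 0 < v1 \<and> 0 < u2 \<and> 0 < v2 \<and> u1 * v1 + u2 * v2 = n}"

definition factor_quads_desc :: "nat \<Rightarrow> ((nat \<times> nat) \<times> (nat \<times> nat)) set" where
  "factor_quads_desc n = {x \<in> factor_quads n. fst (snd x) < fst (fst x)}"

definition bracket_summand :: "nat \<Rightarrow> nat \<Rightarrow> nat \<times> nat \<Rightarrow> rat" where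
  "bracket_summand s r = (\<lambda>(u, v). dpow r (of_nat u) * dpow (s - 1) (of_nat v))"

definition bibracket_summand :: "nat \<Rightarrow> nat \<Rightarrow> nat \<Rightarrow> nat \<Rightarrow> (nat \<times> nat) \<times> (nat \<times> nat) \<Rightarrow> rat" where
  "bibracket_summand s1 r1 s2 r2 = (\<lambda>(x1, x2). bracket_summand s1 r1 x1 * bracket_summand s2 r2 x2)"

lemma finite_factor_pairs: "finite (factor_pairs n)"
proof (rule finite_subset)
  show "factor_pairs n \<subseteq> {..n} \<times> {..n}"
    by (auto simp: factor_pairs_def dest: dvd_imp_le[OF dvd_triv_left] dvd_imp_le[OF dvd_triv_right])
qed simp

lemma finite_factor_quads: "finite (factor_quads n)"
proof (rule finite_subset)
  show "factor_quads n \<subseteq> ({..n} \<times> {..n}) \<times> ({..n} \<times> {..n})"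
  proof
    fix x assume "x \<in> factor_quads n"
    then obtain u1 v1 u2 v2 where x: "x = ((u1, v1), (u2, v2))" and pos: "0 < u1" "0 < v1" "0 < u2" "0 < v2"
      and sum: "u1 * v1 + u2 * v2 = n"
      by (auto simp: factor_quads_def)
    have "u1 \<le> u1 * v1" "v1 \<le> u1 * v1" "u2 \<le> u2 * v2" "v2 \<le> u2 * v2"
      using pos by auto
    with sum have "u1 \<le> n \<and> v1 \<le> n \<and> u2 \<le> n \<and> v2 \<le> n"
      by linarith
    with x show "x \<in> ({..n} \<times> {..n}) \<times> ({..n} \<times> {..n})"
      by simp
  qed
qed simp

lemma bibracket_depth1_nth: "bibracket [s] [r] $ n = (\<Sum>x\<in>factor_pairs n. bracket_summand s r x)"
  unfolding bibracket_def fps_nth_Abs_fps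
  by (rule sum.reindex_bij_witness[where i="\<lambda>(u, v). ([u], [v])" and j="\<lambda>(us, vs). (hd us, hd vs)"])
    (auto simp: factor_pairs_def bracket_summand_def length_Suc_conv dpow_def)

lemma bibracket_depth2_nth:
  "bibracket [s1, s2] [r1, r2] $ n = (\<Sum>x\<in>factor_quads_desc n. bibracket_summand s1 r1 s2 r2 x)"
  unfolding bibracket_def fps_nth_Abs_fps
  by (rule sum.reindex_bij_witness[where i="\<lambda>((u1, v1), (u2, v2)). ([u1, u2], [v1, v2])"
        and j="\<lambda>(us, vs). ((us ! 0, vs ! 0), (us ! 1, vs ! 1))"])
    (auto simp: factor_quads_desc_def factor_quads_def bibracket_summand_def bracket_summand_def
      length_Suc_conv numeral_2_eq_2 lessThan_Suc dpow_def mult_ac)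

lemma bibracket_mult_nth:
  "(bibracket [s1] [r1] * bibracket [s2] [r2]) $ n
     = (\<Sum>x\<in>factor_quads n. bibracket_summand s1 r1 s2 r2 x)"
proof -
  have "(bibracket [s1] [r1] * bibracket [s2] [r2]) $ n
      = (\<Sum>i=0..n. \<Sum>z\<in>factor_pairs i \<times> factor_pairs (n - i). bibracket_summand s1 r1 s2 r2 z)"
    by (simp add: fps_mult_nth bibracket_depth1_nth sum_product sum.cartesian_product
        bibracket_summand_def case_prod_beta)
  also have "\<dots> = (\<Sum>(i, z)\<in>Sigma {0..n} (\<lambda>i. factor_pairs i \<times> factor_pairs (n - i)).
      bibracket_summand s1 r1 s2 r2 z)"
    by (rule sum.Sigma) (auto simp: finite_factor_pairs)
  also have "\<dots> = (\<Sum>x\<in>factor_quads n. bibracket_summand s1 r1 s2 r2 x)"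
    by (rule sum.reindex_bij_witness[where i="\<lambda>z. (fst (fst z) * snd (fst z), z)" and j="\<lambda>(i, z). z"])
      (auto simp: factor_quads_def factor_pairs_def)
  finally show ?thesis .
qed

lemma sum_factor_quads_swap:
  "(\<Sum>x\<in>{x\<in>factor_quads n. P x}. bibracket_summand s1 r1 s2 r2 x)
     = (\<Sum>x\<in>{x\<in>factor_quads n. P (prod.swap x)}. bibracket_summand s2 r2 s1 r1 x)"
  by (rule sum.reindex_bij_witness[where i=prod.swap and j=prod.swap])
    (auto simp: factor_quads_def bibracket_summand_def)

section \<open>Products of depth-one bi-brackets\<close>

lemma sum_factor_quads_u_diagonal:
  "(\<Sum>x\<in>{x\<in>factor_quads n. fst (fst x) = fst (snd x)}. bibracket_summand (Suc a) r1 (Suc b) r2 x)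
     = of_nat ((r1 + r2) choose r1) * (bibracket [Suc a + Suc b] [r1 + r2] $ n
         + (\<Sum>i\<le>a. bernoulli_coeff a b i * bibracket [Suc i] [r1 + r2] $ n)
         + (\<Sum>i\<le>b. bernoulli_coeff b a i * bibracket [Suc i] [r1 + r2] $ n))"
proof -
  define C :: rat where "C = of_nat ((r1 + r2) choose r1)"
  have "(\<Sum>x\<in>{x\<in>factor_quads n. fst (fst x) = fst (snd x)}. bibracket_summand (Suc a) r1 (Suc b) r2 x)
      = (\<Sum>(um, v)\<in>Sigma (factor_pairs n) (\<lambda>(u, m). {1..<m}).
          dpow r1 (of_nat (fst um)) * dpow r2 (of_nat (fst um))
          * (dpow a (of_nat v) * dpow b (of_nat (snd um) - of_nat v)))"
    by (rule sum.reindex_bij_witness[where j="\<lambda>((u1, v1), (u2, v2)). ((u1, v1 + v2), v1)"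
          and i="\<lambda>((u, m), v). ((u, v), (u, m - v))"])
      (auto simp: factor_quads_def factor_pairs_def bibracket_summand_def bracket_summand_def
        algebra_simps)
  also have "\<dots> = (\<Sum>(u, m)\<in>factor_pairs n. C * dpow (r1 + r2) (of_nat u)
      * (\<Sum>v\<in>{1..<m}. dpow a (of_nat v) * dpow b (of_nat m - of_nat v)))"
    by (subst sum.Sigma[symmetric])
      (auto simp: finite_factor_pairs case_prod_beta sum_distrib_left dpow_mult C_def mult.assoc)
  also have "\<dots> = (\<Sum>x\<in>factor_pairs n. C * (bracket_summand (Suc a + Suc b) (r1 + r2) x
      + (\<Sum>i\<le>a. bernoulli_coeff a b i * bracket_summand (Suc i) (r1 + r2) x)
      + (\<Sum>i\<le>b. bernoulli_coeff b a i * bracket_summand (Suc i) (r1 + r2) x)))"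
  proof (intro sum.cong refl)
    fix x assume "x \<in> factor_pairs n"
    then obtain u m where x: "x = (u, m)" and "1 \<le> m" by (auto simp: factor_pairs_def)
    note convolution = dpow_convolution[OF \<open>1 \<le> m\<close>, of a b]
    from x show "(case x of (u, m) \<Rightarrow> C * dpow (r1 + r2) (of_nat u)
        * (\<Sum>v\<in>{1..<m}. dpow a (of_nat v) * dpow b (of_nat m - of_nat v)))
        = C * (bracket_summand (Suc a + Suc b) (r1 + r2) x
          + (\<Sum>i\<le>a. bernoulli_coeff a b i * bracket_summand (Suc i) (r1 + r2) x)
          + (\<Sum>i\<le>b. bernoulli_coeff b a i * bracket_summand (Suc i) (r1 + r2) x))"
      unfolding x prod.case convolution by (simp add: bracket_summand_def sum_distrib_left algebra_simps)
  qed
  finally show ?thesis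
    by (simp add: C_def bibracket_depth1_nth distrib_left sum.distrib sum_distrib_left
        sum.swap[of _ "factor_pairs n"] mult_ac)
qed

lemma bibracket_summand_conjugate:
  "bibracket_summand (Suc a) r1 (Suc b) r2 (map_prod prod.swap prod.swap x)
     = bibracket_summand (Suc r1) a (Suc r2) b x"
proof -
  obtain u1 v1 u2 v2 where "x = ((u1, v1), (u2, v2))" by (metis prod.exhaust)
  then show ?thesis by (simp add: bibracket_summand_def bracket_summand_def mult_ac)
qed

lemma sum_factor_quads_conjugate:
  "(\<Sum>x\<in>{x\<in>factor_quads n. P x}. bibracket_summand (Suc a) r1 (Suc b) r2 x)
     = (\<Sum>x\<in>{x\<in>factor_quads n. P (map_prod prod.swap prod.swap x)}.
          bibracket_summand (Suc r1) a (Suc r2) b x)"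
  by (rule sum.reindex_bij_witness[where i="map_prod prod.swap prod.swap" and j="map_prod prod.swap prod.swap"])
    (auto simp: factor_quads_def bibracket_summand_conjugate mult.commute)

lemma bibracket_depth1_conjugate: "bibracket [Suc s] [r] = bibracket [Suc r] [s]"
proof (rule fps_ext)
  show "bibracket [Suc s] [r] $ n = bibracket [Suc r] [s] $ n" for n
    unfolding bibracket_depth1_nth
    by (rule sum.reindex_bij_witness[where i=prod.swap and j=prod.swap])
      (auto simp: factor_pairs_def bracket_summand_def)
qed

lemma sum_factor_quads_v_diagonal:
  "(\<Sum>x\<in>{x\<in>factor_quads n. snd (fst x) = snd (snd x)}. bibracket_summand (Suc a) r1 (Suc b) r2 x)
     = of_nat ((a + b) choose a) * (bibracket [Suc (a + b)] [r1 + r2 + 1] $ n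
         + (\<Sum>j\<le>r1. bernoulli_coeff r1 r2 j * bibracket [Suc (a + b)] [j] $ n)
         + (\<Sum>j\<le>r2. bernoulli_coeff r2 r1 j * bibracket [Suc (a + b)] [j] $ n))"
proof -
  have "(\<Sum>x\<in>{x\<in>factor_quads n. snd (fst x) = snd (snd x)}. bibracket_summand (Suc a) r1 (Suc b) r2 x)
      = (\<Sum>x\<in>{x\<in>factor_quads n. fst (fst x) = fst (snd x)}. bibracket_summand (Suc r1) a (Suc r2) b x)"
    by (subst sum_factor_quads_conjugate) simp
  also have "\<dots> = of_nat ((a + b) choose a) * (bibracket [Suc r1 + Suc r2] [a + b] $ n
         + (\<Sum>j\<le>r1. bernoulli_coeff r1 r2 j * bibracket [Suc j] [a + b] $ n)
         + (\<Sum>j\<le>r2. bernoulli_coeff r2 r1 j * bibracket [Suc j] [a + b] $ n))"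
    by (rule sum_factor_quads_u_diagonal)
  also have "\<dots> = of_nat ((a + b) choose a) * (bibracket [Suc (a + b)] [r1 + r2 + 1] $ n
         + (\<Sum>j\<le>r1. bernoulli_coeff r1 r2 j * bibracket [Suc (a + b)] [j] $ n)
         + (\<Sum>j\<le>r2. bernoulli_coeff r2 r1 j * bibracket [Suc (a + b)] [j] $ n))"
  proof -
    have "bibracket [Suc j] [a + b] = bibracket [Suc (a + b)] [j]" for j
      by (rule bibracket_depth1_conjugate)
    moreover have "Suc r1 + Suc r2 = Suc (r1 + r2 + 1)" by simp
    ultimately show ?thesis by (simp only:)
  qed
  finally show ?thesis .
qed

lemma bibracket_summand_shear:
  assumes "U2 < U1"
  shows "bibracket_summand (Suc a) r1 (Suc b) r2 ((U2, V1 + V2), (U1 - U2, V1))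
    = (\<Sum>i\<le>a. \<Sum>k\<le>r2. of_nat ((a + b - i) choose (a - i)) * of_nat ((r1 + r2 - k) choose r1)
        * (-1) ^ (r2 - k) * bibracket_summand (Suc (a + b) - i) k (Suc i) (r1 + r2 - k) ((U1, V1), (U2, V2)))"
proof -
  define X1 X2 Y1 Y2 :: rat where "X1 = of_nat U1" "X2 = of_nat U2" "Y1 = of_nat V1" "Y2 = of_nat V2"
  have "bibracket_summand (Suc a) r1 (Suc b) r2 ((U2, V1 + V2), (U1 - U2, V1))
      = dpow r1 X2 * dpow a (Y2 + Y1) * dpow r2 (X1 - X2) * dpow b Y1"
    using assms by (simp add: bibracket_summand_def bracket_summand_def X1_X2_Y1_Y2_def add.commute)
  also have "\<dots> = (\<Sum>i\<le>a. \<Sum>k\<le>r2. (-1) ^ (r2 - k) * dpow k X1 * dpow i Y2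
      * (dpow r1 X2 * dpow (r2 - k) X2) * (dpow (a - i) Y1 * dpow b Y1))"
    unfolding dpow_add dpow_diff sum_distrib_left sum_distrib_right
    by (simp add: mult_ac sum.swap[of _ "{..r2}"])
  also have "\<dots> = (\<Sum>i\<le>a. \<Sum>k\<le>r2. of_nat ((a + b - i) choose (a - i)) * of_nat ((r1 + r2 - k) choose r1)
        * (-1) ^ (r2 - k) * bibracket_summand (Suc (a + b) - i) k (Suc i) (r1 + r2 - k) ((U1, V1), (U2, V2)))"
  proof (intro sum.cong refl)
    fix i k assume "i \<in> {..a}" "k \<in> {..r2}"
    then have "r1 + (r2 - k) = r1 + r2 - k" and "a - i + b = a + b - i" and index: "Suc (a + b) - i - 1 = a + b - i"
      by auto
    then have "dpow r1 X2 * dpow (r2 - k) X2 = of_nat ((r1 + r2 - k) choose r1) * dpow (r1 + r2 - k) X2"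
      and "dpow (a - i) Y1 * dpow b Y1 = of_nat ((a + b - i) choose (a - i)) * dpow (a + b - i) Y1"
      by (simp_all only: dpow_mult)
    with index show "(-1) ^ (r2 - k) * dpow k X1 * dpow i Y2 * (dpow r1 X2 * dpow (r2 - k) X2)
        * (dpow (a - i) Y1 * dpow b Y1)
        = of_nat ((a + b - i) choose (a - i)) * of_nat ((r1 + r2 - k) choose r1) * (-1) ^ (r2 - k)
        * bibracket_summand (Suc (a + b) - i) k (Suc i) (r1 + r2 - k) ((U1, V1), (U2, V2))"
      by (simp add: bibracket_summand_def bracket_summand_def X1_X2_Y1_Y2_def mult_ac)
  qed
  finally show ?thesis .
qed

lemma sum_factor_quads_v_greater:
  "(\<Sum>x\<in>{x\<in>factor_quads n. snd (snd x) < snd (fst x)}. bibracket_summand (Suc a) r1 (Suc b) r2 x)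
     = (\<Sum>i\<le>a. \<Sum>k\<le>r2. of_nat ((a + b - i) choose (a - i)) * of_nat ((r1 + r2 - k) choose r1)
         * (-1) ^ (r2 - k) * bibracket [Suc (a + b) - i, Suc i] [k, r1 + r2 - k] $ n)"
proof -
  have shear_v: "(u1 + u2) * v2 + u1 * (v1 - v2) = u1 * v1 + u2 * v2" if "v2 < v1" for u1 u2 v1 v2 :: nat
  proof -
    have "u1 * v2 \<le> u1 * v1" using that by simp
    then show ?thesis unfolding distrib_right diff_mult_distrib2 by linarith
  qed
  have shear_u: "u2 * (v1 + v2) + (u1 - u2) * v1 = u1 * v1 + u2 * v2" if "u2 < u1" for u1 u2 v1 v2 :: nat
  proof -
    have "u2 * v1 \<le> u1 * v1" using that by simp
    then show ?thesis unfolding distrib_left diff_mult_distrib by linarith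
  qed
  have "(\<Sum>x\<in>{x\<in>factor_quads n. snd (snd x) < snd (fst x)}. bibracket_summand (Suc a) r1 (Suc b) r2 x)
      = (\<Sum>y\<in>factor_quads_desc n.
          bibracket_summand (Suc a) r1 (Suc b) r2
            ((\<lambda>((U1, V1), (U2, V2)). ((U2, V1 + V2), (U1 - U2, V1))) y))"
    by (rule sum.reindex_bij_witness[where i="\<lambda>((U1, V1), (U2, V2)). ((U2, V1 + V2), (U1 - U2, V1))"
          and j="\<lambda>((u1, v1), (u2, v2)). ((u1 + u2, v2), (u1, v1 - v2))"])
      (auto simp: factor_quads_desc_def factor_quads_def shear_u shear_v)
  also have "\<dots> = (\<Sum>y\<in>factor_quads_desc n. \<Sum>i\<le>a. \<Sum>k\<le>r2. of_nat ((a + b - i) choose (a - i))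
      * of_nat ((r1 + r2 - k) choose r1) * (-1) ^ (r2 - k)
      * bibracket_summand (Suc (a + b) - i) k (Suc i) (r1 + r2 - k) y)"
    by (intro sum.cong refl) (auto simp: factor_quads_desc_def bibracket_summand_shear)
  finally show ?thesis
    by (simp add: bibracket_depth2_nth sum_distrib_left sum.swap[of _ "factor_quads_desc n"])
qed

lemma sum_factor_quads_v_less:
  "(\<Sum>x\<in>{x\<in>factor_quads n. snd (fst x) < snd (snd x)}. bibracket_summand (Suc a) r1 (Suc b) r2 x)
     = (\<Sum>i\<le>b. \<Sum>k\<le>r1. of_nat ((a + b - i) choose a) * of_nat ((r1 + r2 - k) choose (r1 - k))
         * (-1) ^ (r1 - k) * bibracket [Suc (a + b) - i, Suc i] [k, r1 + r2 - k] $ n)"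
proof -
  have "(\<Sum>x\<in>{x\<in>factor_quads n. snd (fst x) < snd (snd x)}. bibracket_summand (Suc a) r1 (Suc b) r2 x)
      = (\<Sum>x\<in>{x\<in>factor_quads n. snd (snd x) < snd (fst x)}. bibracket_summand (Suc b) r2 (Suc a) r1 x)"
    by (subst sum_factor_quads_swap) simp
  also have "\<dots> = (\<Sum>i\<le>b. \<Sum>k\<le>r1. of_nat ((b + a - i) choose (b - i)) * of_nat ((r2 + r1 - k) choose r2)
         * (-1) ^ (r1 - k) * bibracket [Suc (b + a) - i, Suc i] [k, r2 + r1 - k] $ n)"
    by (rule sum_factor_quads_v_greater)
  also have "\<dots> = (\<Sum>i\<le>b. \<Sum>k\<le>r1. of_nat ((a + b - i) choose a) * of_nat ((r1 + r2 - k) choose (r1 - k))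
         * (-1) ^ (r1 - k) * bibracket [Suc (a + b) - i, Suc i] [k, r1 + r2 - k] $ n)"
  proof (intro sum.cong refl)
    fix i k assume "i \<in> {..b}" "k \<in> {..r1}"
    then have "(b + a - i) choose (b - i) = (a + b - i) choose a"
      and "(r2 + r1 - k) choose r2 = (r1 + r2 - k) choose (r1 - k)"
      using binomial_symmetric[of "b - i" "b + a - i"] binomial_symmetric[of r2 "r2 + r1 - k"]
      by (simp_all add: add.commute)
    then show "of_nat ((b + a - i) choose (b - i)) * of_nat ((r2 + r1 - k) choose r2)
         * (-1) ^ (r1 - k) * bibracket [Suc (b + a) - i, Suc i] [k, r2 + r1 - k] $ n
        = of_nat ((a + b - i) choose a) * of_nat ((r1 + r2 - k) choose (r1 - k))
         * (-1) ^ (r1 - k) * bibracket [Suc (a + b) - i, Suc i] [k, r1 + r2 - k] $ n"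
      by (simp add: add.commute)
  qed
  finally show ?thesis .
qed

lemma bibracket_product_stuffle:
  "bibracket [Suc a] [r1] * bibracket [Suc b] [r2]
     = bibracket [Suc a, Suc b] [r1, r2] + bibracket [Suc b, Suc a] [r2, r1]
       + fps_const (of_nat ((r1 + r2) choose r1)) * (bibracket [Suc a + Suc b] [r1 + r2]
         + (\<Sum>i\<le>a. fps_const (bernoulli_coeff a b i) * bibracket [Suc i] [r1 + r2])
         + (\<Sum>i\<le>b. fps_const (bernoulli_coeff b a i) * bibracket [Suc i] [r1 + r2]))"
  (is "?lhs = ?rhs")
proof (rule fps_ext)
  fix n
  let ?S = "\<lambda>P. \<Sum>x\<in>{x\<in>factor_quads n. P x}. bibracket_summand (Suc a) r1 (Suc b) r2 x"
  have "?lhs $ n = ?S (\<lambda>x. fst (fst x) < fst (snd x)) + ?S (\<lambda>x. fst (snd x) < fst (fst x))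
        + ?S (\<lambda>x. fst (fst x) = fst (snd x))"
    unfolding bibracket_mult_nth by (rule sum_split_by_order[OF finite_factor_quads])
  moreover have "?S (\<lambda>x. fst (fst x) < fst (snd x)) = bibracket [Suc b, Suc a] [r2, r1] $ n"
    by (subst sum_factor_quads_swap) (simp add: bibracket_depth2_nth factor_quads_desc_def)
  moreover have "?S (\<lambda>x. fst (snd x) < fst (fst x)) = bibracket [Suc a, Suc b] [r1, r2] $ n"
    by (simp add: bibracket_depth2_nth factor_quads_desc_def)
  ultimately show "?lhs $ n = ?rhs $ n"
    by (simp add: sum_factor_quads_u_diagonal fps_sum_nth)
qed

lemma bibracket_product_dual_stuffle:
  "bibracket [Suc a] [r1] * bibracket [Suc b] [r2]
     = (\<Sum>i\<le>a. \<Sum>k\<le>r2. fps_const (of_nat ((a + b - i) choose (a - i)) * of_nat ((r1 + r2 - k) choose r1)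
          * (-1) ^ (r2 - k)) * bibracket [Suc (a + b) - i, Suc i] [k, r1 + r2 - k])
       + (\<Sum>i\<le>b. \<Sum>k\<le>r1. fps_const (of_nat ((a + b - i) choose a) * of_nat ((r1 + r2 - k) choose (r1 - k))
          * (-1) ^ (r1 - k)) * bibracket [Suc (a + b) - i, Suc i] [k, r1 + r2 - k])
       + fps_const (of_nat ((a + b) choose a)) * (bibracket [Suc (a + b)] [r1 + r2 + 1]
         + (\<Sum>j\<le>r1. fps_const (bernoulli_coeff r1 r2 j) * bibracket [Suc (a + b)] [j])
         + (\<Sum>j\<le>r2. fps_const (bernoulli_coeff r2 r1 j) * bibracket [Suc (a + b)] [j]))"
  (is "?lhs = ?rhs")
proof (rule fps_ext)
  fix n
  let ?S = "\<lambda>P. \<Sum>x\<in>{x\<in>factor_quads n. P x}. bibracket_summand (Suc a) r1 (Suc b) r2 x"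
  have "?lhs $ n = ?S (\<lambda>x. snd (fst x) < snd (snd x)) + ?S (\<lambda>x. snd (snd x) < snd (fst x))
        + ?S (\<lambda>x. snd (fst x) = snd (snd x))"
    unfolding bibracket_mult_nth by (rule sum_split_by_order[OF finite_factor_quads])
  then show "?lhs $ n = ?rhs $ n"
    by (simp add: sum_factor_quads_v_less sum_factor_quads_v_greater sum_factor_quads_v_diagonal fps_sum_nth)
qed

theorem proposition3p3:
  fixes s1 s2 r1 r2 :: nat
  assumes "s1 \<ge> 1" and "s2 \<ge> 1"
  shows
   "bibracket [s1] [r1] * bibracket [s2] [r2] =
      bibracket [s1, s2] [r1, r2] + bibracket [s2, s1] [r2, r1]
      + fps_const (of_nat ((r1 + r2) choose r1)) * bibracket [s1 + s2] [r1 + r2]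
      + fps_const (of_nat ((r1 + r2) choose r1)) *
          (\<Sum>j=1..s1. fps_const ((-1) ^ (s2 - 1) * bernoulli (s1 + s2 - j) / fact (s1 + s2 - j)
                          * of_nat ((s1 + s2 - j - 1) choose (s1 - j)))
                      * bibracket [j] [r1 + r2])
      + fps_const (of_nat ((r1 + r2) choose r1)) *
          (\<Sum>j=1..s2. fps_const ((-1) ^ (s1 - 1) * bernoulli (s1 + s2 - j) / fact (s1 + s2 - j)
                          * of_nat ((s1 + s2 - j - 1) choose (s2 - j)))
                      * bibracket [j] [r1 + r2])
    \<and>
    bibracket [s1] [r1] * bibracket [s2] [r2] =
      (\<Sum>j=1..s1. \<Sum>k=0..r2.
          fps_const (of_nat ((s1 + s2 - j - 1) choose (s1 - j)) * of_nat ((r1 + r2 - k) choose r1)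
                     * (-1) ^ (r2 - k))
          * bibracket [s1 + s2 - j, j] [k, r1 + r2 - k])
      + (\<Sum>j=1..s2. \<Sum>k=0..r1.
          fps_const (of_nat ((s1 + s2 - j - 1) choose (s1 - 1)) * of_nat ((r1 + r2 - k) choose (r1 - k))
                     * (-1) ^ (r1 - k))
          * bibracket [s1 + s2 - j, j] [k, r1 + r2 - k])
      + fps_const (of_nat ((s1 + s2 - 2) choose (s1 - 1))) * bibracket [s1 + s2 - 1] [r1 + r2 + 1]
      + fps_const (of_nat ((s1 + s2 - 2) choose (s1 - 1))) *
          (\<Sum>j=0..r1. fps_const ((-1) ^ r2 * bernoulli (r1 + r2 - j + 1) / fact (r1 + r2 - j + 1)
                          * of_nat ((r1 + r2 - j) choose (r1 - j)))
                      * bibracket [s1 + s2 - 1] [j])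
      + fps_const (of_nat ((s1 + s2 - 2) choose (s1 - 1))) *
          (\<Sum>j=0..r2. fps_const ((-1) ^ r1 * bernoulli (r1 + r2 - j + 1) / fact (r1 + r2 - j + 1)
                          * of_nat ((r1 + r2 - j) choose (r2 - j)))
                      * bibracket [s1 + s2 - 1] [j])"
proof -
  obtain a b where s1: "s1 = Suc a" and s2: "s2 = Suc b"
    using assms by (metis Suc_diff_1 less_eq_Suc_le One_nat_def)
  have shift: "(\<Sum>j=1..Suc m. f j) = (\<Sum>i\<le>m. f (Suc i))" for m and f :: "nat \<Rightarrow> rat fps"
    by (simp only: One_nat_def sum.shift_bounds_cl_Suc_ivl atMost_atLeast0)
  show ?thesis
    unfolding s1 s2 shift atMost_atLeast0[symmetric]
    by (rule conjI[OF trans[OF bibracket_product_stuffle] trans[OF bibracket_product_dual_stuffle]])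
      (simp_all add: bernoulli_coeff_def bernoulli_eq_fps_nth[symmetric] distrib_left Suc_diff_le
        add.commute[of b a] add.commute[of r2 r1])
qed

end
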